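(* Let $R$ be a commutative ring and $(M_t,M_h;\mu_a,\mu_b)$ an object of $\mathrm{Rep}_R(\varkappa)$. Put $K=\ker(\mu_a)\cap\ker(\mu_b)$, $L_t=M_t/K$, $L_h=M_h$, $\lambda_a(m+K)=\mu_a(m)$, $\lambda_b(m+K)=\mu_b(m)$, $f_t(m)=m+K$ and $f_h=\mathrm{id}_{M_h}$. Then $(f_t,f_h)\colon(M_t,M_h;\mu_a,\mu_b)\to(L_t,L_h;\lambda_a,\lambda_b)$ is a $\mathrm{Rel}_R(\varkappa)$-envelope.
   Context: $\mathrm{Rep}_R(\varkappa)$: objects $(M_t,M_h;\mu_a,\mu_b)$ with $\mu_a,\mu_b\in\mathrm{Hom}_R(M_t,M_h)$, morphisms pairs $(f_t,f_h)$ of $R$-linear maps with $f_h\mu_c=\mu'_cf_t$ ($c=a,b$). $\mathrm{Rel}_R(\varkappa)$: full subcategory of objects with $\ker(\mu_a)\cap\ker(\mu_b)=0$. For a full subcategory $\mathcal{C}$, a $\mathcal{C}$-preenvelope of $M$ is a morphism $b\colon M\to N$ with $N\in\mathcal{C}$ such that every morphism $M\to C$ with $C\in\mathcal{C}$ factors as $ab$; a $\mathcal{C}$-envelope is a preenvelope $b$ such that every endomorphism $a$ of $N$ with $ab=b$ is an isomorphism. *)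

theory Defs
  imports "HOL-Algebra.Module" "HOL-Algebra.AbelCoset"
begin

definition lin_map :: "('r, 'x) ring_scheme \<Rightarrow> ('r, 'a) module \<Rightarrow> ('r, 'b) module \<Rightarrow> ('a \<Rightarrow> 'b) \<Rightarrow> bool" where
  "lin_map R M N f \<longleftrightarrow> f \<in> carrier M \<rightarrow> carrier N
     \<and> (\<forall>x\<in>carrier M. \<forall>y\<in>carrier M. f (x \<oplus>\<^bsub>M\<^esub> y) = f x \<oplus>\<^bsub>N\<^esub> f y)
     \<and> (\<forall>r\<in>carrier R. \<forall>x\<in>carrier M. f (r \<odot>\<^bsub>M\<^esub> x) = r \<odot>\<^bsub>N\<^esub> f x)"

text \<open>Objects of Rep_R(kappa): (M_t, M_h, mu_a, mu_b).\<close>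
type_synonym ('r, 'a, 'b) rep = "('r, 'a) module \<times> ('r, 'b) module \<times> ('a \<Rightarrow> 'b) \<times> ('a \<Rightarrow> 'b)"

definition rep_obj :: "('r, 'x) ring_scheme \<Rightarrow> ('r, 'a, 'b) rep \<Rightarrow> bool" where
  "rep_obj R X = (case X of (Mt, Mh, ma, mb) \<Rightarrow>
     module R Mt \<and> module R Mh \<and> lin_map R Mt Mh ma \<and> lin_map R Mt Mh mb)"

definition rel_obj :: "('r, 'x) ring_scheme \<Rightarrow> ('r, 'a, 'b) rep \<Rightarrow> bool" where
  "rel_obj R X = (rep_obj R X \<and> (case X of (Mt, Mh, ma, mb) \<Rightarrow>
     {m \<in> carrier Mt. ma m = \<zero>\<^bsub>Mh\<^esub>} \<inter> {m \<in> carrier Mt. mb m = \<zero>\<^bsub>Mh\<^esub>} = {\<zero>\<^bsub>Mt\<^esub>}))"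

definition rep_mor :: "('r, 'x) ring_scheme \<Rightarrow> ('r, 'a, 'b) rep \<Rightarrow> ('r, 'c, 'd) rep
     \<Rightarrow> ('a \<Rightarrow> 'c) \<times> ('b \<Rightarrow> 'd) \<Rightarrow> bool" where
  "rep_mor R X Y f = (rep_obj R X \<and> rep_obj R Y \<and> (case X of (Mt, Mh, ma, mb) \<Rightarrow> case Y of (Nt, Nh, na, nb) \<Rightarrow>
     case f of (ft, fh) \<Rightarrow>
       lin_map R Mt Nt ft \<and> lin_map R Mh Nh fh
       \<and> (\<forall>m\<in>carrier Mt. fh (ma m) = na (ft m))
       \<and> (\<forall>m\<in>carrier Mt. fh (mb m) = nb (ft m))))"

definition rep_comp :: "('c \<Rightarrow> 'e) \<times> ('d \<Rightarrow> 'g) \<Rightarrow> ('a \<Rightarrow> 'c) \<times> ('b \<Rightarrow> 'd) \<Rightarrow> ('a \<Rightarrow> 'e) \<times> ('b \<Rightarrow> 'g)" where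
  "rep_comp g f = (fst g \<circ> fst f, snd g \<circ> snd f)"

definition mor_eq :: "('r, 'a, 'b) rep \<Rightarrow> ('a \<Rightarrow> 'c) \<times> ('b \<Rightarrow> 'd) \<Rightarrow> ('a \<Rightarrow> 'c) \<times> ('b \<Rightarrow> 'd) \<Rightarrow> bool" where
  "mor_eq X f g = (case X of (Mt, Mh, ma, mb) \<Rightarrow>
     (\<forall>m\<in>carrier Mt. fst f m = fst g m) \<and> (\<forall>m\<in>carrier Mh. snd f m = snd g m))"

definition rep_iso :: "('r, 'x) ring_scheme \<Rightarrow> ('r, 'a, 'b) rep \<Rightarrow> ('r, 'c, 'd) rep
     \<Rightarrow> ('a \<Rightarrow> 'c) \<times> ('b \<Rightarrow> 'd) \<Rightarrow> bool" where
  "rep_iso R X Y f = (rep_mor R X Y f \<and> (\<exists>g. rep_mor R Y X g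
     \<and> mor_eq X (rep_comp g f) (id, id) \<and> mor_eq Y (rep_comp f g) (id, id)))"

text \<open>The test objects C range over all objects of
  Rel_R(kappa) whose underlying modules live in the types 'c, 'd (supplied via TYPE(...));
  used with free type variables this quantifies over all objects.\<close>
definition rel_preenvelope :: "('c \<times> 'd) itself \<Rightarrow> ('r, 'x) ring_scheme \<Rightarrow> ('r, 'a, 'b) rep
     \<Rightarrow> ('r, 'e, 'g) rep \<Rightarrow> ('a \<Rightarrow> 'e) \<times> ('b \<Rightarrow> 'g) \<Rightarrow> bool" where
  "rel_preenvelope T R X N b = (rel_obj R N \<and> rep_mor R X N b \<and>
     (\<forall>(C :: ('r, 'c, 'd) rep) g. rel_obj R C \<and> rep_mor R X C g \<longrightarrow>
        (\<exists>a. rep_mor R N C a \<and> mor_eq X g (rep_comp a b))))"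

definition rel_envelope :: "('c \<times> 'd) itself \<Rightarrow> ('r, 'x) ring_scheme \<Rightarrow> ('r, 'a, 'b) rep
     \<Rightarrow> ('r, 'e, 'g) rep \<Rightarrow> ('a \<Rightarrow> 'e) \<times> ('b \<Rightarrow> 'g) \<Rightarrow> bool" where
  "rel_envelope T R X N b = (rel_preenvelope T R X N b \<and>
     (\<forall>a. rep_mor R N N a \<and> mor_eq X (rep_comp a b) b \<longrightarrow> rep_iso R N N a))"

definition quot_module :: "('r, 'x) ring_scheme \<Rightarrow> ('r, 'a) module \<Rightarrow> 'a set \<Rightarrow> ('r, 'a set) module" where
  "quot_module R M K = \<lparr>carrier = A_RCOSETS M K, mult = undefined, one = undefined,
     zero = K, add = set_add M,
     smult = (\<lambda>r C. K +>\<^bsub>M\<^esub> (r \<odot>\<^bsub>M\<^esub> (SOME m. m \<in> C)))\<rparr>"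

end

theory Submission
  imports Defs
begin

(* K is a submodule, being the intersection of two kernels, so L_t = M_t/K is a module and
   lambda_a, lambda_b are well defined; lambda_a(m + K) = lambda_b(m + K) = 0 forces m in K,
   so the quotient object lies in Rel.  A morphism (g_t, g_h) from (M_t, M_h; mu_a, mu_b) into an
   object (C_t, C_h; gamma_a, gamma_b) of Rel kills K, since gamma_c(g_t k) = g_h(mu_c k) = 0 for
   c = a, b and gamma_a, gamma_b have no common kernel; hence g_t factors through M_t/K and
   (g_t, g_h) factors through (f_t, id).  Finally f_t is surjective, so an endomorphism a of the
   quotient object with a o (f_t, f_h) = (f_t, f_h) is the identity. *)

lemma lin_map_abelian_group_hom:
  assumes "module R M" "module R N" "lin_map R M N f"
  shows "abelian_group_hom M N f"
proof -
  interpret M: module R M by fact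
  interpret N: module R N by fact
  show ?thesis
    using assms(3) M.a_group N.a_group
    by (intro abelian_group_homI M.abelian_group_axioms N.abelian_group_axioms)
       (auto simp: group_hom_def group_hom_axioms_def hom_def lin_map_def)
qed

lemma lin_map_id: "lin_map R M M id"
  unfolding lin_map_def by auto

lemma lin_map_smult:
  "lin_map R M N f \<Longrightarrow> r \<in> carrier R \<Longrightarrow> x \<in> carrier M \<Longrightarrow> f (r \<odot>\<^bsub>M\<^esub> x) = r \<odot>\<^bsub>N\<^esub> f x"
  unfolding lin_map_def by blast

lemma submodule_lin_map_kernel:
  assumes M: "module R M" and N: "module R N" and f: "lin_map R M N f"
  shows "submodule {m \<in> carrier M. f m = \<zero>\<^bsub>N\<^esub>} R M"
proof -
  interpret M: module R M by (rule M)
  interpret N: module R N by (rule N)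
  interpret f: abelian_group_hom M N f by (rule lin_map_abelian_group_hom[OF M N f])
  show ?thesis
    by (rule M.submoduleI) (auto simp: f.hom_a_inv lin_map_smult[OF f])
qed

lemma (in module) submodule_Int:
  assumes "submodule H R M" "submodule H' R M"
  shows "submodule (H \<inter> H') R M"
  using assms add.subgroups_Inter_pair
  by (auto simp: submodule_def submodule_axioms_def)

locale quotient_module = module R M + submodule K R M
  for R :: "('r, 'x) ring_scheme" and M :: "('r, 'a) module" (structure) and K
begin

sublocale K: abelian_subgroup K M
  by (intro abelian_subgroupI3 abelian_group_axioms)
     (simp add: additive_subgroup_def subgroup_axioms)

abbreviation Q where "Q \<equiv> quot_module R M K"

lemma quot_module_simps:
  "carrier Q = a_rcosets K" "zero Q = K" "add Q = set_add M"
  by (simp_all add: quot_module_def)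

lemma quot_carrier_cases:
  assumes "C \<in> carrier Q"
  obtains x where "x \<in> carrier M" "C = K +> x"
  using assms by (auto simp: quot_module_simps A_RCOSETS_def')

lemma coset_in_quot_carrier: "x \<in> carrier M \<Longrightarrow> K +> x \<in> carrier Q"
  by (simp add: quot_module_simps a_rcosetsI K.a_subset)

lemma quot_zero_coset: "\<zero>\<^bsub>Q\<^esub> = K +> \<zero>"
  by (simp add: quot_module_simps K.a_rcos_const)

lemma quot_add_coset:
  "x \<in> carrier M \<Longrightarrow> y \<in> carrier M \<Longrightarrow> (K +> x) \<oplus>\<^bsub>Q\<^esub> (K +> y) = K +> (x \<oplus> y)"
  by (simp add: quot_module_simps K.a_rcos_sum)

lemma some_in_coset: "x \<in> carrier M \<Longrightarrow> (SOME y. y \<in> K +> x) \<in> K +> x"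
  using K.a_rcos_self by (rule someI)

lemma quot_smult_coset:
  assumes r: "r \<in> carrier R" and x: "x \<in> carrier M"
  shows "r \<odot>\<^bsub>Q\<^esub> (K +> x) = K +> (r \<odot> x)"
proof -
  define y where "y = (SOME y. y \<in> K +> x)"
  obtain k where k: "k \<in> K" "y = k \<oplus> x"
    using some_in_coset[OF x] unfolding y_def a_r_coset_def' by blast
  have "r \<odot> y = r \<odot> k \<oplus> r \<odot> x"
    using r k x by (simp add: smult_r_distr)
  then have "r \<odot> y \<in> K +> (r \<odot> x)"
    using r k(1) unfolding a_r_coset_def' by blast
  then have "K +> (r \<odot> x) = K +> (r \<odot> y)"
    using r x by (intro K.a_repr_independence') auto
  then show ?thesis
    by (simp add: quot_module_def y_def)
qed

lemma module_quot_module: "module R Q"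
proof (rule moduleI)
  show "cring R" ..
  show "abelian_group Q"
  proof (rule abelian_groupI)
    fix C D E assume "C \<in> carrier Q" "D \<in> carrier Q" "E \<in> carrier Q"
    then obtain x y z where "x \<in> carrier M" "y \<in> carrier M" "z \<in> carrier M"
      and "C = K +> x" "D = K +> y" "E = K +> z"
      by (metis quot_carrier_cases)
    then show "C \<oplus>\<^bsub>Q\<^esub> D \<in> carrier Q" "C \<oplus>\<^bsub>Q\<^esub> D = D \<oplus>\<^bsub>Q\<^esub> C"
      "C \<oplus>\<^bsub>Q\<^esub> D \<oplus>\<^bsub>Q\<^esub> E = C \<oplus>\<^bsub>Q\<^esub> (D \<oplus>\<^bsub>Q\<^esub> E)"
      "\<zero>\<^bsub>Q\<^esub> \<oplus>\<^bsub>Q\<^esub> C = C" "\<exists>C'\<in>carrier Q. C' \<oplus>\<^bsub>Q\<^esub> C = \<zero>\<^bsub>Q\<^esub>"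
      by (auto simp: quot_zero_coset quot_add_coset coset_in_quot_carrier a_ac l_neg r_neg
          intro!: bexI[of _ "K +> \<ominus> x"])
  next
    show "\<zero>\<^bsub>Q\<^esub> \<in> carrier Q" by (simp add: quot_zero_coset coset_in_quot_carrier)
  qed
qed (auto elim!: quot_carrier_cases
      simp: quot_smult_coset quot_add_coset coset_in_quot_carrier smult_l_distr smult_r_distr
        smult_assoc1)

lemma lin_map_quot_projection: "lin_map R M Q (\<lambda>x. K +> x)"
  unfolding lin_map_def
  by (auto simp: coset_in_quot_carrier quot_add_coset quot_smult_coset)

lemma lin_map_eq_on_coset:
  assumes N: "module R N" and g: "lin_map R M N g" and g_K: "\<forall>k\<in>K. g k = \<zero>\<^bsub>N\<^esub>"
    and x: "x \<in> carrier M" and y: "y \<in> K +> x"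
  shows "g y = g x"
proof -
  interpret N: module R N by (rule N)
  interpret g: abelian_group_hom M N g by (rule lin_map_abelian_group_hom[OF module_axioms N g])
  obtain k where "k \<in> K" "y = k \<oplus> x"
    using y unfolding a_r_coset_def' by blast
  then show ?thesis
    using g_K x by simp
qed

lemma lin_map_some_in_coset:
  assumes "module R N" "lin_map R M N g" "\<forall>k\<in>K. g k = \<zero>\<^bsub>N\<^esub>" "x \<in> carrier M"
  shows "g (SOME y. y \<in> K +> x) = g x"
  by (rule lin_map_eq_on_coset[OF assms some_in_coset[OF assms(4)]])

lemma lin_map_induced:
  assumes N: "module R N" and g: "lin_map R M N g" and g_K: "\<forall>k\<in>K. g k = \<zero>\<^bsub>N\<^esub>"
  shows "lin_map R Q N (\<lambda>C. g (SOME y. y \<in> C))"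
proof -
  interpret g: abelian_group_hom M N g by (rule lin_map_abelian_group_hom[OF module_axioms N g])
  note induced = lin_map_some_in_coset[OF N g g_K]
  show ?thesis
    unfolding lin_map_def
    by (auto elim!: quot_carrier_cases
        simp: induced quot_add_coset quot_smult_coset lin_map_smult[OF g])
qed

end

lemma rep_mor_id: "rep_obj R X \<Longrightarrow> rep_mor R X X (id, id)"
  by (cases X) (auto simp: rep_mor_def rep_obj_def lin_map_id)

lemma rep_iso_if_mor_eq_id:
  assumes "rep_mor R X X a" "mor_eq X a (id, id)"
  shows "rep_iso R X X a"
proof -
  have "rep_mor R X X (id, id)"
    using assms(1) by (intro rep_mor_id) (simp add: rep_mor_def)
  moreover have "mor_eq X (rep_comp (id, id) a) (id, id)" "mor_eq X (rep_comp a (id, id)) (id, id)"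
    using assms(2) by (cases X, cases a, simp add: mor_eq_def rep_comp_def)+
  ultimately show ?thesis
    using assms(1) unfolding rep_iso_def by blast
qed

lemma rep_mor_into_rel_obj_vanishes:
  assumes C: "rel_obj R (Ct, Ch, ca, cb)" and g: "rep_mor R (Mt, Mh, ma, mb) (Ct, Ch, ca, cb) (gt, gh)"
    and m: "m \<in> carrier Mt" "ma m = \<zero>\<^bsub>Mh\<^esub>" "mb m = \<zero>\<^bsub>Mh\<^esub>"
  shows "gt m = \<zero>\<^bsub>Ct\<^esub>"
proof -
  have modules: "module R Mt" "module R Ct" "module R Mh" "module R Ch"
    and lin: "lin_map R Mt Ct gt" "lin_map R Mh Ch gh"
    using g by (simp_all add: rep_mor_def rep_obj_def)
  interpret gt: abelian_group_hom Mt Ct gt by (rule lin_map_abelian_group_hom[OF modules(1,2) lin(1)])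
  interpret gh: abelian_group_hom Mh Ch gh by (rule lin_map_abelian_group_hom[OF modules(3,4) lin(2)])
  have "ca (gt m) = gh (ma m)" "cb (gt m) = gh (mb m)"
    using g m(1) by (simp_all add: rep_mor_def)
  then have "gt m \<in> {x \<in> carrier Ct. ca x = \<zero>\<^bsub>Ch\<^esub>} \<inter> {x \<in> carrier Ct. cb x = \<zero>\<^bsub>Ch\<^esub>}"
    using m by simp
  also have "\<dots> = {\<zero>\<^bsub>Ct\<^esub>}"
    using C by (simp add: rel_obj_def)
  finally show ?thesis
    by simp
qed

locale rep_quotient =
  fixes R :: "('r, 'x) ring_scheme"
    and Mt :: "('r, 'a) module" and Mh :: "('r, 'b) module"
    and ma mb :: "'a \<Rightarrow> 'b"
  assumes rep_obj: "rep_obj R (Mt, Mh, ma, mb)"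
begin

abbreviation K where
  "K \<equiv> {m \<in> carrier Mt. ma m = \<zero>\<^bsub>Mh\<^esub>} \<inter> {m \<in> carrier Mt. mb m = \<zero>\<^bsub>Mh\<^esub>}"

abbreviation X where "X \<equiv> (Mt, Mh, ma, mb)"

abbreviation N where
  "N \<equiv> (quot_module R Mt K, Mh, (\<lambda>C. ma (SOME m. m \<in> C)), (\<lambda>C. mb (SOME m. m \<in> C)))"

abbreviation proj where "proj \<equiv> (\<lambda>m. K +>\<^bsub>Mt\<^esub> m, id)"

lemma modules: "module R Mt" "module R Mh"
  and lin_maps: "lin_map R Mt Mh ma" "lin_map R Mt Mh mb"
  using rep_obj by (simp_all add: rep_obj_def)

lemma ma_mb_vanish_on_K: "\<forall>k\<in>K. ma k = \<zero>\<^bsub>Mh\<^esub>" "\<forall>k\<in>K. mb k = \<zero>\<^bsub>Mh\<^esub>"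
  by blast+

sublocale Q: quotient_module R Mt K
proof -
  interpret Mt: module R Mt by (rule modules(1))
  show "quotient_module R Mt K"
    by (intro quotient_module.intro modules(1) Mt.submodule_Int submodule_lin_map_kernel modules lin_maps)
qed

lemmas ma_mb_some_in_coset = Q.lin_map_some_in_coset[OF modules(2) lin_maps(1) ma_mb_vanish_on_K(1)]
  Q.lin_map_some_in_coset[OF modules(2) lin_maps(2) ma_mb_vanish_on_K(2)]

lemma rep_obj_N: "rep_obj R N"
  unfolding rep_obj_def prod.case
  by (intro conjI Q.module_quot_module modules(2) Q.lin_map_induced lin_maps ma_mb_vanish_on_K)

lemma rel_obj_N: "rel_obj R N"
proof -
  have "C = K" if C: "C \<in> carrier Q.Q"
    and vanish: "ma (SOME m. m \<in> C) = \<zero>\<^bsub>Mh\<^esub>" "mb (SOME m. m \<in> C) = \<zero>\<^bsub>Mh\<^esub>" for C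
  proof -
    obtain x where x: "x \<in> carrier Mt" "C = K +>\<^bsub>Mt\<^esub> x"
      using C by (rule Q.quot_carrier_cases)
    have "ma x = \<zero>\<^bsub>Mh\<^esub>" "mb x = \<zero>\<^bsub>Mh\<^esub>"
      using vanish unfolding x(2) ma_mb_some_in_coset[OF x(1)] .
    then have "x \<in> K"
      using x(1) by blast
    then show "C = K"
      unfolding x(2) by (rule Q.K.a_rcos_const)
  qed
  moreover have "(SOME m. m \<in> K) \<in> K"
    using Q.K.zero_closed by (rule someI)
  moreover have "K \<in> carrier Q.Q"
    unfolding Q.quot_module_simps by (rule Q.K.a_subgroup_in_rcosets)
  ultimately have "{C \<in> carrier Q.Q. ma (SOME m. m \<in> C) = \<zero>\<^bsub>Mh\<^esub>}
      \<inter> {C \<in> carrier Q.Q. mb (SOME m. m \<in> C) = \<zero>\<^bsub>Mh\<^esub>} = {\<zero>\<^bsub>Q.Q\<^esub>}"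
    unfolding Q.quot_module_simps by blast
  then show ?thesis
    unfolding rel_obj_def prod.case using rep_obj_N by (intro conjI)
qed

lemma rep_mor_proj: "rep_mor R X N proj"
  unfolding rep_mor_def prod.case
proof (intro conjI ballI rep_obj rep_obj_N Q.lin_map_quot_projection lin_map_id)
  fix m assume "m \<in> carrier Mt"
  then show "id (ma m) = ma (SOME x. x \<in> K +>\<^bsub>Mt\<^esub> m)" "id (mb m) = mb (SOME x. x \<in> K +>\<^bsub>Mt\<^esub> m)"
    by (simp_all only: id_apply ma_mb_some_in_coset)
qed

lemma rep_mor_factors_through_proj:
  assumes C: "rel_obj R C" and g: "rep_mor R X C g"
  shows "\<exists>a. rep_mor R N C a \<and> mor_eq X g (rep_comp a proj)"
proof -
  obtain Ct Ch ca cb where C_def: "C = (Ct, Ch, ca, cb)"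
    by (cases C)
  obtain gt gh where g_def: "g = (gt, gh)"
    by (cases g)
  have C_obj: "rep_obj R C"
    using C by (simp add: rel_obj_def)
  have modules_C: "module R Ct" "module R Ch"
    using C_obj unfolding C_def rep_obj_def by simp_all
  have lin_g: "lin_map R Mt Ct gt" "lin_map R Mh Ch gh"
    and comm: "\<forall>m\<in>carrier Mt. gh (ma m) = ca (gt m)" "\<forall>m\<in>carrier Mt. gh (mb m) = cb (gt m)"
    using g unfolding C_def g_def rep_mor_def prod.case by blast+
  have gt_K: "\<forall>k\<in>K. gt k = \<zero>\<^bsub>Ct\<^esub>"
  proof
    fix k assume "k \<in> K"
    then have "k \<in> carrier Mt" "ma k = \<zero>\<^bsub>Mh\<^esub>" "mb k = \<zero>\<^bsub>Mh\<^esub>"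
      by blast+
    with C g show "gt k = \<zero>\<^bsub>Ct\<^esub>"
      unfolding C_def g_def by (rule rep_mor_into_rel_obj_vanishes)
  qed
  note gt_coset = Q.lin_map_some_in_coset[OF modules_C(1) lin_g(1) gt_K]
  let ?a = "(\<lambda>D. gt (SOME x. x \<in> D), gh)"
  have "rep_mor R N C ?a"
    unfolding rep_mor_def prod.case C_def
  proof (intro conjI ballI rep_obj_N Q.lin_map_induced[OF modules_C(1) lin_g(1) gt_K] lin_g(2))
    show "rep_obj R (Ct, Ch, ca, cb)"
      using C_obj by (simp only: C_def)
    fix D assume "D \<in> carrier Q.Q"
    then obtain x where x: "x \<in> carrier Mt" "D = K +>\<^bsub>Mt\<^esub> x"
      by (rule Q.quot_carrier_cases)
    show "gh (ma (SOME m. m \<in> D)) = ca (gt (SOME m. m \<in> D))"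
      "gh (mb (SOME m. m \<in> D)) = cb (gt (SOME m. m \<in> D))"
      unfolding x(2) ma_mb_some_in_coset[OF x(1)] gt_coset[OF x(1)] using comm x(1) by blast+
  qed
  moreover have "mor_eq X g (rep_comp ?a proj)"
    unfolding g_def mor_eq_def rep_comp_def prod.case comp_apply fst_conv snd_conv id_apply
    by (intro conjI ballI) (simp_all only: gt_coset)
  ultimately show ?thesis
    by blast
qed

lemma rep_iso_if_fixes_proj:
  assumes a: "rep_mor R N N a" and a_proj: "mor_eq X (rep_comp a proj) proj"
  shows "rep_iso R N N a"
proof (rule rep_iso_if_mor_eq_id[OF a])
  obtain at ah where a_def: "a = (at, ah)"
    by (cases a)
  have at_coset: "at (K +>\<^bsub>Mt\<^esub> m) = K +>\<^bsub>Mt\<^esub> m" if "m \<in> carrier Mt" for m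
    using a_proj that unfolding a_def mor_eq_def rep_comp_def prod.case comp_apply fst_conv by blast
  have "at D = D" if "D \<in> carrier Q.Q" for D
    using that by (rule Q.quot_carrier_cases) (simp only: at_coset)
  moreover have "ah y = y" if "y \<in> carrier Mh" for y
    using a_proj that unfolding a_def mor_eq_def rep_comp_def prod.case comp_apply snd_conv id_apply
    by blast
  ultimately show "mor_eq N a (id, id)"
    unfolding a_def mor_eq_def prod.case fst_conv snd_conv id_apply by blast
qed

end

theorem lemma3p7:
  fixes R :: "('r, 'x) ring_scheme"
    and Mt :: "('r, 'a) module" and Mh :: "('r, 'b) module"
    and ma mb :: "'a \<Rightarrow> 'b"
  assumes "cring R"
    and "rep_obj R (Mt, Mh, ma, mb)"
  defines "K \<equiv> {m \<in> carrier Mt. ma m = \<zero>\<^bsub>Mh\<^esub>} \<inter> {m \<in> carrier Mt. mb m = \<zero>\<^bsub>Mh\<^esub>}"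
  shows "rel_envelope TYPE('c \<times> 'd) R (Mt, Mh, ma, mb)
           (quot_module R Mt K, Mh, (\<lambda>C. ma (SOME m. m \<in> C)), (\<lambda>C. mb (SOME m. m \<in> C)))
           (\<lambda>m. K +>\<^bsub>Mt\<^esub> m, id)"
proof -
  \<comment> \<open>The hypothesis cring R is implied by rep_obj: HOL-Algebra modules are over commutative rings.\<close>
  interpret rep_quotient R Mt Mh ma mb
    using assms(2) by (rule rep_quotient.intro)
  show ?thesis
    unfolding K_def rel_envelope_def rel_preenvelope_def
    using rel_obj_N rep_mor_proj rep_mor_factors_through_proj rep_iso_if_fixes_proj by blast
qed

end
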